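(* For every digraph $D$ and every integer $k$ with $2\le k\le |V(D)|$, we have $\kappa_k(D)\le\delta^+(D)$ and $\kappa_k(D)\le\delta^-(D)$.
   Context: Digraphs are finite, without loops and without parallel arcs. $\delta^+(D)$ and $\delta^-(D)$ denote the minimum out-degree and minimum in-degree of $D$. A digraph is strong if for every ordered pair of vertices $u,v$ there is a directed path from $u$ to $v$; a one-vertex digraph is strong. For $S\subseteq V(D)$, strong subgraphs $D_1,\dots,D_p$ of $D$ each containing $S$ are $S$-internally disjoint if $V(D_i)\cap V(D_j)=S$ and $A(D_i)\cap A(D_j)=\emptyset$ for all $i<j$. $\kappa_S(D)$ is the maximum number of $S$-internally disjoint strong subgraphs containing $S$, and $\kappa_k(D)=\min\{\kappa_S(D): S\subseteq V(D),\ |S|=k\}$. *)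

theory Defs
  imports Main
begin

text \<open>A digraph is given by a finite vertex set V and an arc set A \<subseteq> V \<times> V without loops
  (arcs as pairs, so there are no parallel arcs).\<close>
definition digraph :: "'a set \<Rightarrow> ('a \<times> 'a) set \<Rightarrow> bool" where
  "digraph V A \<longleftrightarrow> finite V \<and> A \<subseteq> V \<times> V \<and> (\<forall>v. (v, v) \<notin> A)"

definition out_degree :: "('a \<times> 'a) set \<Rightarrow> 'a \<Rightarrow> nat" where
  "out_degree A v = card {w. (v, w) \<in> A}"

definition in_degree :: "('a \<times> 'a) set \<Rightarrow> 'a \<Rightarrow> nat" where
  "in_degree A v = card {u. (u, v) \<in> A}"

definition min_out_degree :: "'a set \<Rightarrow> ('a \<times> 'a) set \<Rightarrow> nat" where
  "min_out_degree V A = Min (out_degree A ` V)"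

definition min_in_degree :: "'a set \<Rightarrow> ('a \<times> 'a) set \<Rightarrow> nat" where
  "min_in_degree V A = Min (in_degree A ` V)"

definition subgraph :: "'a set \<Rightarrow> ('a \<times> 'a) set \<Rightarrow> 'a set \<Rightarrow> ('a \<times> 'a) set \<Rightarrow> bool" where
  "subgraph H B V A \<longleftrightarrow> H \<subseteq> V \<and> B \<subseteq> A \<and> B \<subseteq> H \<times> H"

definition strong :: "'a set \<Rightarrow> ('a \<times> 'a) set \<Rightarrow> bool" where
  "strong H B \<longleftrightarrow> (\<forall>u\<in>H. \<forall>v\<in>H. (u, v) \<in> B\<^sup>*)"

definition S_disjoint_family ::
  "'a set \<Rightarrow> ('a \<times> 'a) set \<Rightarrow> 'a set \<Rightarrow> nat \<Rightarrow> (nat \<Rightarrow> 'a set) \<Rightarrow> (nat \<Rightarrow> ('a \<times> 'a) set) \<Rightarrow> bool" where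
  "S_disjoint_family V A S p Vs As \<longleftrightarrow>
     (\<forall>i<p. subgraph (Vs i) (As i) V A \<and> strong (Vs i) (As i) \<and> S \<subseteq> Vs i) \<and>
     (\<forall>i<p. \<forall>j<p. i \<noteq> j \<longrightarrow> Vs i \<inter> Vs j = S \<and> As i \<inter> As j = {})"

definition kappa_S :: "'a set \<Rightarrow> ('a \<times> 'a) set \<Rightarrow> 'a set \<Rightarrow> nat" where
  "kappa_S V A S = Max {p. \<exists>Vs As. S_disjoint_family V A S p Vs As}"

definition kappa_k :: "'a set \<Rightarrow> ('a \<times> 'a) set \<Rightarrow> nat \<Rightarrow> nat" where
  "kappa_k V A k = Min {kappa_S V A S | S. S \<subseteq> V \<and> card S = k}"

end

theory Submission
  imports Defs
begin

text \<open>Let S contain v and some w \<noteq> v. Each strong subgraph of an S-internally disjoint family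
  contains a path from v to w, hence an arc leaving v; these arcs are distinct because the
  subgraphs are arc-disjoint, so the family has at most out-degree(v) members. Choosing v of
  minimum out-degree and any k-set S containing v bounds kappa_k by the minimum out-degree.
  Reversing all arcs preserves strong subgraphs and turns in-degrees into out-degrees, which
  gives the bound by the minimum in-degree.\<close>

lemma digraph_finite_arcs: "digraph V A \<Longrightarrow> finite A"
  unfolding digraph_def by (meson finite_SigmaI finite_subset)

lemma digraph_converse: "digraph V A \<Longrightarrow> digraph V (A\<inverse>)"
  unfolding digraph_def by auto

lemma in_degree_eq_out_degree_converse: "in_degree A v = out_degree (A\<inverse>) v"
  unfolding in_degree_def out_degree_def by simp

lemma min_in_degree_eq_min_out_degree_converse:
  "min_in_degree V A = min_out_degree V (A\<inverse>)"
  unfolding min_in_degree_def min_out_degree_def in_degree_eq_out_degree_converse ..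

lemma strong_converse: "strong H (B\<inverse>) \<longleftrightarrow> strong H B"
  unfolding strong_def by (auto simp: rtrancl_converse)

lemma S_disjoint_family_converse:
  assumes "S_disjoint_family V A S p Vs As"
  shows "S_disjoint_family V (A\<inverse>) S p Vs (\<lambda>i. (As i)\<inverse>)"
  using assms unfolding S_disjoint_family_def subgraph_def strong_converse
  by (auto simp flip: converse_Int)

lemma kappa_S_converse: "kappa_S V (A\<inverse>) S = kappa_S V A S"
proof -
  have "{p. \<exists>Vs As. S_disjoint_family V B S p Vs As}
      \<subseteq> {p. \<exists>Vs As. S_disjoint_family V (B\<inverse>) S p Vs As}" for B :: "('a \<times> 'a) set"
    using S_disjoint_family_converse by blast
  from this[of A] this[of "A\<inverse>"] have
    "{p. \<exists>Vs As. S_disjoint_family V (A\<inverse>) S p Vs As} = {p. \<exists>Vs As. S_disjoint_family V A S p Vs As}"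
    unfolding converse_converse by (rule subset_antisym[rotated])
  then show ?thesis unfolding kappa_S_def by simp
qed

lemma kappa_k_converse: "kappa_k V (A\<inverse>) k = kappa_k V A k"
  unfolding kappa_k_def kappa_S_converse ..

lemma strong_out_arc:
  assumes "strong H B" and "v \<in> H" and "w \<in> H" and "v \<noteq> w"
  shows "\<exists>x. (v, x) \<in> B"
proof -
  from assms have "(v, w) \<in> B\<^sup>*" unfolding strong_def by blast
  with \<open>v \<noteq> w\<close> show ?thesis by (blast elim: converse_rtranclE)
qed

lemma finite_out_neighbours: "finite A \<Longrightarrow> finite {x. (v, x) \<in> A}"
  by (rule finite_subset[of _ "snd ` A"]) force+

lemma S_disjoint_family_le_out_degree:
  assumes "finite A" and F: "S_disjoint_family V A S p Vs As"
    and "v \<in> S" and "w \<in> S" and "v \<noteq> w"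
  shows "p \<le> out_degree A v"
proof -
  have "\<exists>x. (v, x) \<in> As i" if "i < p" for i
  proof -
    from F that have "strong (Vs i) (As i)" "S \<subseteq> Vs i"
      unfolding S_disjoint_family_def by auto
    with \<open>v \<in> S\<close> \<open>w \<in> S\<close> \<open>v \<noteq> w\<close> show ?thesis
      by (intro strong_out_arc[of "Vs i" _ v w]) auto
  qed
  then obtain f where f: "\<And>i. i < p \<Longrightarrow> (v, f i) \<in> As i" by metis
  have arc_disjoint: "\<And>i j. i < p \<Longrightarrow> j < p \<Longrightarrow> i \<noteq> j \<Longrightarrow> As i \<inter> As j = {}"
    and arcs: "\<And>i. i < p \<Longrightarrow> As i \<subseteq> A"
    using F unfolding S_disjoint_family_def subgraph_def by auto
  have "inj_on f {..<p}"
  proof (rule inj_onI)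
    fix i j assume "i \<in> {..<p}" "j \<in> {..<p}" "f i = f j"
    with f[of i] f[of j] arc_disjoint[of i j] show "i = j" by auto
  qed
  moreover have "f ` {..<p} \<subseteq> {x. (v, x) \<in> A}"
    using f arcs by blast
  ultimately have "card {..<p} \<le> out_degree A v"
    unfolding out_degree_def by (rule card_inj_on_le[OF _ _ finite_out_neighbours[OF \<open>finite A\<close>]])
  then show ?thesis by simp
qed

lemma kappa_S_le:
  assumes "\<And>p Vs As. S_disjoint_family V A S p Vs As \<Longrightarrow> p \<le> d"
  shows "kappa_S V A S \<le> d"
proof -
  let ?P = "{p. \<exists>Vs As. S_disjoint_family V A S p Vs As}"
  have "finite ?P" using assms by (auto intro: finite_subset[of _ "{..d}"])
  moreover have "0 \<in> ?P" unfolding S_disjoint_family_def by auto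
  ultimately show ?thesis unfolding kappa_S_def using assms by (subst Max_le_iff) auto
qed

lemma kappa_S_le_out_degree:
  assumes "finite A" and "v \<in> S" and "2 \<le> card S"
  shows "kappa_S V A S \<le> out_degree A v"
proof -
  have "\<not> S \<subseteq> {v}"
  proof
    assume "S \<subseteq> {v}"
    then have "card S \<le> card {v}" by (intro card_mono) auto
    with assms(3) show False by simp
  qed
  then obtain w where "w \<in> S" "w \<noteq> v" by blast
  have "p \<le> out_degree A v" if "S_disjoint_family V A S p Vs As" for p Vs As
    using S_disjoint_family_le_out_degree[OF \<open>finite A\<close> that \<open>v \<in> S\<close> \<open>w \<in> S\<close>] \<open>w \<noteq> v\<close>
    by simp
  then show ?thesis by (rule kappa_S_le)
qed

lemma kappa_k_le_kappa_S:
  assumes "finite V" and "S \<subseteq> V" and "card S = k"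
  shows "kappa_k V A k \<le> kappa_S V A S"
proof -
  have "{kappa_S V A S | S. S \<subseteq> V \<and> card S = k} = kappa_S V A ` {S. S \<subseteq> V \<and> card S = k}"
    by auto
  then have "finite {kappa_S V A S | S. S \<subseteq> V \<and> card S = k}"
    using \<open>finite V\<close> by simp
  then show ?thesis unfolding kappa_k_def using assms by (intro Min_le) auto
qed

lemma obtain_subset_with_card_containing:
  assumes "finite V" and "v \<in> V" and "1 \<le> k" and "k \<le> card V"
  obtains S where "S \<subseteq> V" and "card S = k" and "v \<in> S"
proof -
  have "k - 1 \<le> card (V - {v})" using assms by simp
  then obtain T where T: "T \<subseteq> V - {v}" "card T = k - 1"
    by (meson obtain_subset_with_card_n)
  moreover from T have "finite T" "v \<notin> T" using \<open>finite V\<close> finite_subset by auto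
  ultimately have "card (insert v T) = k" using \<open>1 \<le> k\<close> by simp
  with T assms show thesis by (intro that[of "insert v T"]) auto
qed

lemma kappa_k_le_min_out_degree:
  assumes "digraph V A" and "2 \<le> k" and "k \<le> card V"
  shows "kappa_k V A k \<le> min_out_degree V A"
proof -
  have "finite V" "V \<noteq> {}" using assms unfolding digraph_def by auto
  then have "min_out_degree V A \<in> out_degree A ` V"
    unfolding min_out_degree_def by (intro Min_in) auto
  then obtain v where "v \<in> V" and v: "min_out_degree V A = out_degree A v" by blast
  with assms \<open>finite V\<close> obtain S where S: "S \<subseteq> V" "card S = k" "v \<in> S"
    by (elim obtain_subset_with_card_containing) auto
  have "kappa_k V A k \<le> kappa_S V A S"
    using kappa_k_le_kappa_S[OF \<open>finite V\<close> S(1,2)] .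
  also have "\<dots> \<le> out_degree A v"
    using kappa_S_le_out_degree[OF digraph_finite_arcs[OF assms(1)] S(3)] S(2) assms(2)
    by simp
  finally show ?thesis unfolding v .
qed

theorem lemma3p2:
  fixes V :: "'a set" and A :: "('a \<times> 'a) set" and k :: nat
  assumes "digraph V A" and "2 \<le> k" and "k \<le> card V"
  shows "kappa_k V A k \<le> min_out_degree V A \<and> kappa_k V A k \<le> min_in_degree V A"
  using kappa_k_le_min_out_degree[OF assms]
    kappa_k_le_min_out_degree[OF digraph_converse[OF assms(1)] assms(2,3)]
  by (simp add: kappa_k_converse min_in_degree_eq_min_out_degree_converse)

end
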